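(* Let $X$ be a Type I space, written as $X=\bigcup_{\alpha<\omega_1}U_\alpha$ as in the definition of Type I, and let $h_t:X\to X$, $t\in[0,1]$, be an isotopy of homeomorphisms. Then $$\Big\{\alpha<\omega_1 \;:\; h_t\Big(\bigcup_{\beta<\alpha}U_\beta\Big)=\bigcup_{\beta<\alpha}U_\beta \text{ for all } t\in[0,1]\Big\}$$ is a closed unbounded subset of $\omega_1$.
   Context: A topological space $X$ is of Type I if it is the union of an $\omega_1$-sequence $\langle U_\alpha:\alpha<\omega_1\rangle$ of open subsets such that whenever $\alpha<\beta<\omega_1$ we have $\overline{U_\alpha}\subset U_\beta$ and $U_\alpha$ is Lindelöf. An isotopy of homeomorphisms of $X$ is a continuous map $H:X\times[0,1]\to X$ such that each $h_t=H(\cdot,t)$ is a homeomorphism of $X$. *)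

theory Defs
  imports "HOL-Analysis.Analysis"
begin

text \<open>A well-ordered type is (order-isomorphic to) omega_1 iff it is uncountable
  and every proper initial segment is countable.\<close>
definition omega1_type :: "'i::wellorder itself \<Rightarrow> bool" where
  "omega1_type _ \<longleftrightarrow> uncountable (UNIV :: 'i set) \<and> (\<forall>\<alpha>::'i. countable {\<beta>. \<beta> < \<alpha>})"

definition type_I_seq :: "('i::wellorder \<Rightarrow> 'a::topological_space set) \<Rightarrow> bool" where
  "type_I_seq U \<longleftrightarrow>
     (\<Union>\<alpha>. U \<alpha>) = UNIV \<and>
     (\<forall>\<alpha>. open (U \<alpha>)) \<and>
     (\<forall>\<alpha>. Lindelof_space (subtopology euclidean (U \<alpha>))) \<and>
     (\<forall>\<alpha> \<beta>. \<alpha> < \<beta> \<longrightarrow> closure (U \<alpha>) \<subseteq> U \<beta>)"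

definition isotopy :: "('a::topological_space \<times> real \<Rightarrow> 'a) \<Rightarrow> bool" where
  "isotopy H \<longleftrightarrow> continuous_on (UNIV \<times> {0..1}) H \<and>
     (\<forall>t\<in>{0..1}. \<exists>g. homeomorphism UNIV UNIV (\<lambda>x. H (x, t)) g)"

definition club :: "'i::wellorder set \<Rightarrow> bool" where
  "club C \<longleftrightarrow>
     (\<forall>\<alpha>. \<exists>\<gamma>\<in>C. \<alpha> \<le> \<gamma>) \<and>
     (\<forall>\<alpha>. ((\<exists>\<gamma>\<in>C. \<gamma> < \<alpha>) \<and> (\<forall>\<beta><\<alpha>. \<exists>\<gamma>\<in>C. \<beta> < \<gamma> \<and> \<gamma> < \<alpha>)) \<longrightarrow> \<alpha> \<in> C)"

end

theory Submission
  imports Defs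
begin

(* Write W(alpha) (initial_union U alpha) for the union of the U(beta) with beta < alpha,
   and h_t for the time-t map of the isotopy H.  The proof has three layers.
   (1) Facts about omega_1: countable sets are bounded, every omega-sequence has a
       supremum, and a decreasing omega_1-sequence of open sets in a second countable
       space with empty intersection is eventually empty.
   (2) Bounding lemma: for every beta there is delta such that, for all t in [0,1],
       h_t(U beta) and h_t^{-1}(U beta) lie in U delta (H "confines" U beta to U delta).
       For a single t this holds because continuous images of the Lindeloef set U beta
       are covered by countably many U gamma.  Uniformity in t: the set of times at
       which some point escapes the closure of U delta is open; these sets decrease
       with delta and have empty intersection, so by (1) one of them is empty.
   (3) Club argument: iterating (2) omega times from alpha and taking the supremum
       yields an invariant W(gamma) above alpha (unboundedness); W(alpha) is the union
       of the invariant W(gamma) below alpha whenever these are cofinal (closedness). *)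

section \<open>Facts about omega_1\<close>

lemma omega1_countable_bounded:
  fixes A :: "'i::wellorder set"
  assumes o: "omega1_type TYPE('i)" and A: "countable A"
  shows "\<exists>\<gamma>. \<forall>a\<in>A. a < \<gamma>"
proof (rule ccontr)
  assume "\<not> ?thesis"
  then have "\<forall>\<gamma>. \<exists>a\<in>A. \<gamma> \<le> a" by (meson not_le)
  then have "UNIV \<subseteq> (\<Union>a\<in>A. insert a {\<beta>. \<beta> < a})" by (auto simp: le_less)
  moreover have "countable (\<Union>a\<in>A. insert a {\<beta>. \<beta> < a})"
    using o A unfolding omega1_type_def by auto
  ultimately have "countable (UNIV :: 'i set)" by (rule countable_subset)
  with o show False unfolding omega1_type_def by auto
qed

lemma omega1_sequence_sup:
  fixes a :: "nat \<Rightarrow> 'i::wellorder"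
  assumes o: "omega1_type TYPE('i)"
  obtains \<gamma> where "\<And>n. a n < \<gamma>" and "\<And>\<beta>. \<beta> < \<gamma> \<Longrightarrow> \<exists>n. \<beta> \<le> a n"
proof
  have ex: "\<exists>\<gamma>. \<forall>n. a n < \<gamma>"
    using omega1_countable_bounded[OF o, of "range a"] by auto
  show "a n < (LEAST \<gamma>. \<forall>n. a n < \<gamma>)" for n
    using LeastI_ex[OF ex] by blast
  show "\<exists>n. \<beta> \<le> a n" if "\<beta> < (LEAST \<gamma>. \<forall>n. a n < \<gamma>)" for \<beta>
    using not_less_Least[OF that] by (meson not_less)
qed

text \<open>A decreasing omega_1-sequence of open sets in a second countable space with empty
  intersection has an empty member: each basic set can only survive up to a
  countable stage, and omega_1 is not reached by countably many stages.\<close>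
lemma omega1_decreasing_open_eventually_empty:
  fixes T :: "'i::wellorder \<Rightarrow> 'b::second_countable_topology set"
  assumes o: "omega1_type TYPE('i)" and open_T: "\<And>\<delta>. open (T \<delta>)"
    and decreasing: "\<And>\<delta> \<delta>'. \<delta> \<le> \<delta>' \<Longrightarrow> T \<delta>' \<subseteq> T \<delta>"
    and escape: "\<And>t. \<exists>\<delta>. t \<notin> T \<delta>"
  shows "\<exists>\<delta>. T \<delta> = {}"
proof -
  obtain \<B> :: "'b set set" where \<B>: "countable \<B>" "\<And>S. open S \<Longrightarrow> \<exists>W. W \<subseteq> \<B> \<and> S = \<Union>W"
    by (metis univ_second_countable)
  define leave where "leave b = (LEAST \<delta>. \<not> b \<subseteq> T \<delta>)" for b
  obtain \<delta>0 where \<delta>0: "\<forall>\<delta>\<in>leave ` \<B>. \<delta> < \<delta>0"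
    using omega1_countable_bounded[OF o countable_image[OF \<B>(1)]] by blast
  have "T \<delta>0 = {}"
  proof (rule ccontr)
    assume "T \<delta>0 \<noteq> {}"
    then obtain t where "t \<in> T \<delta>0" by blast
    then obtain b where b: "b \<in> \<B>" "t \<in> b" "b \<subseteq> T \<delta>0"
      using \<B>(2)[OF open_T] by blast
    obtain \<delta> where "t \<notin> T \<delta>" using escape by blast
    then have "\<not> b \<subseteq> T \<delta>" using b by blast
    then have "\<not> b \<subseteq> T (leave b)" unfolding leave_def by (rule LeastI)
    moreover have "T \<delta>0 \<subseteq> T (leave b)"
      using \<delta>0 b(1) by (intro decreasing) (auto intro: less_imp_le)
    ultimately show False using b(3) by blast
  qed
  then show ?thesis by blast
qed

section \<open>Bounding images in a Type I space\<close>

lemma type_I_seq_mono: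
  assumes "type_I_seq U" "\<alpha> \<le> \<beta>"
  shows "U \<alpha> \<subseteq> U \<beta>"
  using assms closure_subset unfolding type_I_seq_def by (metis order.order_iff_strict subset_trans)

lemma lindelof_in_increasing_open_cover:
  fixes V :: "'i::wellorder \<Rightarrow> 'a::topological_space set"
  assumes o: "omega1_type TYPE('i)" and L: "Lindelof_space (subtopology euclidean S)"
    and open_V: "\<And>\<gamma>. open (V \<gamma>)" and mono_V: "mono V" and cover: "S \<subseteq> (\<Union>\<gamma>. V \<gamma>)"
  shows "\<exists>\<delta>. S \<subseteq> V \<delta>"
proof -
  have "(\<forall>W\<in>range V. openin euclidean W) \<and> topspace euclidean \<inter> S \<subseteq> \<Union>(range V)"
    using open_V cover by auto
  then obtain \<V> where \<V>: "countable \<V>" "\<V> \<subseteq> range V" "topspace euclidean \<inter> S \<subseteq> \<Union>\<V>"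
    using L[unfolded Lindelof_space_subtopology, THEN spec[of _ "range V"]] by blast
  obtain J where J: "countable J" "\<V> = V ` J"
    using \<V>(1,2) countable_subset_image[of \<V> V UNIV] by blast
  obtain \<delta> where \<delta>: "\<forall>\<gamma>\<in>J. \<gamma> < \<delta>" using omega1_countable_bounded[OF o J(1)] by blast
  have "V \<gamma> \<subseteq> V \<delta>" if "\<gamma> \<in> J" for \<gamma>
    using mono_V \<delta> that by (auto dest: monoD intro: less_imp_le)
  moreover have "S \<subseteq> \<Union>(V ` J)" using \<V>(3) J(2) by simp
  ultimately have "S \<subseteq> V \<delta>" by blast
  then show ?thesis by blast
qed

lemma type_I_continuous_image_bounded:
  fixes U :: "'i::wellorder \<Rightarrow> 'a::topological_space set"
  assumes o: "omega1_type TYPE('i)" and TI: "type_I_seq U" and g: "continuous_on UNIV g"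
  shows "\<exists>\<delta>. g ` U \<beta> \<subseteq> U \<delta>"
proof -
  have "\<exists>\<delta>. U \<beta> \<subseteq> g -` U \<delta>"
  proof (rule lindelof_in_increasing_open_cover[OF o])
    show "Lindelof_space (subtopology euclidean (U \<beta>))"
      using TI unfolding type_I_seq_def by blast
    show "open (g -` U \<gamma>)" for \<gamma>
      using TI g by (simp add: type_I_seq_def continuous_on_open_vimage)
    show "mono (\<lambda>\<gamma>. g -` U \<gamma>)"
      using type_I_seq_mono[OF TI] by (simp add: mono_def vimage_mono)
    have "g x \<in> (\<Union>\<gamma>. U \<gamma>)" for x
      using TI unfolding type_I_seq_def by simp
    then show "U \<beta> \<subseteq> (\<Union>\<gamma>. g -` U \<gamma>)" by blast
  qed
  then show ?thesis by blast
qed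

section \<open>Uniform bounds for an isotopy\<close>

definition confines :: "('a \<times> real \<Rightarrow> 'a) \<Rightarrow> 'a set \<Rightarrow> 'a set \<Rightarrow> bool" where
  "confines H A B \<longleftrightarrow> (\<forall>t\<in>{0..1}. (\<lambda>x. H (x, t)) ` A \<subseteq> B \<and> (\<lambda>x. H (x, t)) -` A \<subseteq> B)"

lemma confines_mono: "confines H A B \<Longrightarrow> B \<subseteq> B' \<Longrightarrow> confines H A B'"
  unfolding confines_def by blast

lemma confines_UN: "(\<And>i. confines H (A i) (B i)) \<Longrightarrow> confines H (\<Union>i\<in>I. A i) (\<Union>i\<in>I. B i)"
  unfolding confines_def image_UN vimage_UN by (blast intro: UN_mono)

lemma isotopy_homeomorphism:
  assumes "isotopy H" "t \<in> {0..1}"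
  obtains g where "homeomorphism UNIV UNIV (\<lambda>x. H (x, t)) g"
  using assms unfolding isotopy_def by blast

text \<open>Extending time constantly outside [0,1] makes every trajectory continuous on all of
  the real line, so that sets of times can be studied in the open-set topology of the reals.\<close>
definition clamp01 :: "real \<Rightarrow> real" where
  "clamp01 s = max 0 (min 1 s)"

lemma isotopy_trajectory_continuous:
  assumes "isotopy H"
  shows "continuous_on UNIV (\<lambda>s. H (y, clamp01 s))"
proof -
  have "continuous_on (UNIV \<times> {0..1}) H" using assms unfolding isotopy_def by blast
  moreover have "continuous_on UNIV (\<lambda>s. (y, clamp01 s))"
    unfolding clamp01_def by (intro continuous_intros)
  moreover have "range (\<lambda>s. (y, clamp01 s)) \<subseteq> UNIV \<times> {0..1}"
    by (auto simp: clamp01_def)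
  ultimately show ?thesis using continuous_on_compose2 by blast
qed

lemma isotopy_hitting_times_open:
  assumes "isotopy H" "open Q"
  shows "open {s. \<exists>y\<in>P. H (y, clamp01 s) \<in> Q}"
proof -
  have "{s. \<exists>y\<in>P. H (y, clamp01 s) \<in> Q} = (\<Union>y\<in>P. (\<lambda>s. H (y, clamp01 s)) -` Q)" by blast
  then show ?thesis
    using assms isotopy_trajectory_continuous[OF assms(1)]
    by (simp add: open_UN continuous_on_open_vimage)
qed

text \<open>Bound for a single time t: apply the image bound to h_t and to its inverse.\<close>
lemma isotopy_slice_bounded:
  fixes U :: "'i::wellorder \<Rightarrow> 'a::topological_space set"
  assumes o: "omega1_type TYPE('i)" and TI: "type_I_seq U" and iso: "isotopy H"
    and t: "t \<in> {0..1}"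
  shows "\<exists>\<delta>. (\<lambda>x. H (x, t)) ` U \<beta> \<subseteq> U \<delta> \<and> (\<lambda>x. H (x, t)) -` U \<beta> \<subseteq> U \<delta>"
proof -
  obtain g where hg: "homeomorphism UNIV UNIV (\<lambda>x. H (x, t)) g"
    using isotopy_homeomorphism[OF iso t] by blast
  then have cont: "continuous_on UNIV (\<lambda>x. H (x, t))" "continuous_on UNIV g"
    and left_inverse: "\<And>x. g (H (x, t)) = x"
    unfolding homeomorphism_def by auto
  have preimage: "(\<lambda>x. H (x, t)) -` A \<subseteq> g ` A" for A
  proof
    fix x assume "x \<in> (\<lambda>x. H (x, t)) -` A"
    then show "x \<in> g ` A" using left_inverse[of x] by (metis imageI vimageD)
  qed
  obtain \<delta>1 where "(\<lambda>x. H (x, t)) ` U \<beta> \<subseteq> U \<delta>1"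
    using type_I_continuous_image_bounded[OF o TI cont(1)] by blast
  moreover obtain \<delta>2 where "g ` U \<beta> \<subseteq> U \<delta>2"
    using type_I_continuous_image_bounded[OF o TI cont(2)] by blast
  moreover have "U \<delta>1 \<subseteq> U (max \<delta>1 \<delta>2)" "U \<delta>2 \<subseteq> U (max \<delta>1 \<delta>2)"
    using type_I_seq_mono[OF TI, of \<delta>1 "max \<delta>1 \<delta>2"] type_I_seq_mono[OF TI, of \<delta>2 "max \<delta>1 \<delta>2"]
    by simp_all
  ultimately show ?thesis
    using preimage[of "U \<beta>"] by (intro exI[of _ "max \<delta>1 \<delta>2"]) blast
qed

text \<open>The escape times E(delta), at which some
  point of U beta leaves the closure of U delta or some point outside that closure
  enters U beta, form a decreasing family of open sets with empty intersection.\<close>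
lemma isotopy_uniformly_bounded:
  fixes U :: "'i::wellorder \<Rightarrow> 'a::topological_space set"
  assumes o: "omega1_type TYPE('i)" and TI: "type_I_seq U" and iso: "isotopy H"
  shows "\<exists>\<delta>. confines H (U \<beta>) (U \<delta>)"
proof -
  define E where "E \<delta> = {s. \<exists>y\<in>U \<beta>. H (y, clamp01 s) \<in> - closure (U \<delta>)}
    \<union> {s. \<exists>y\<in>- closure (U \<delta>). H (y, clamp01 s) \<in> U \<beta>}" for \<delta>
  have "\<exists>\<delta>. E \<delta> = {}"
  proof (rule omega1_decreasing_open_eventually_empty[OF o])
    have "open (U \<beta>)" using TI unfolding type_I_seq_def by blast
    then show "open (E \<delta>)" for \<delta>
      unfolding E_def by (intro open_Un isotopy_hitting_times_open iso open_Compl closed_closure)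
    show "E \<delta>' \<subseteq> E \<delta>" if "\<delta> \<le> \<delta>'" for \<delta> \<delta>'
      using closure_mono[OF type_I_seq_mono[OF TI that]] unfolding E_def by blast
    show "\<exists>\<delta>. s \<notin> E \<delta>" for s
    proof -
      have "clamp01 s \<in> {0..1}" by (simp add: clamp01_def)
      then obtain \<delta> where "(\<lambda>x. H (x, clamp01 s)) ` U \<beta> \<subseteq> U \<delta>"
        and "(\<lambda>x. H (x, clamp01 s)) -` U \<beta> \<subseteq> U \<delta>"
        using isotopy_slice_bounded[OF o TI iso] by blast
      then have "s \<notin> E \<delta>" using closure_subset[of "U \<delta>"] unfolding E_def by blast
      then show ?thesis by blast
    qed
  qed
  then obtain \<delta>0 where \<delta>0: "E \<delta>0 = {}" by blast
  obtain \<delta> where "\<delta>0 < \<delta>" using omega1_countable_bounded[OF o, of "{\<delta>0}"] by auto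
  then have closure_in: "closure (U \<delta>0) \<subseteq> U \<delta>" using TI unfolding type_I_seq_def by blast
  have "confines H (U \<beta>) (U \<delta>)"
    unfolding confines_def
  proof (intro ballI conjI)
    fix t :: real assume "t \<in> {0..1}"
    then have "clamp01 t = t" by (simp add: clamp01_def)
    moreover have "t \<notin> E \<delta>0" using \<delta>0 by blast
    ultimately have "(\<lambda>x. H (x, t)) ` U \<beta> \<subseteq> closure (U \<delta>0)"
      and "(\<lambda>x. H (x, t)) -` U \<beta> \<subseteq> closure (U \<delta>0)"
      unfolding E_def by auto
    with closure_in show "(\<lambda>x. H (x, t)) ` U \<beta> \<subseteq> U \<delta>" and "(\<lambda>x. H (x, t)) -` U \<beta> \<subseteq> U \<delta>"
      by blast+
  qed
  then show ?thesis by blast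
qed

section \<open>The club of invariant initial unions\<close>

definition initial_union :: "('i::wellorder \<Rightarrow> 'a set) \<Rightarrow> 'i \<Rightarrow> 'a set" where
  "initial_union U \<alpha> = (\<Union>\<beta>\<in>{..<\<alpha>}. U \<beta>)"

lemma isotopy_initial_union_bounded:
  fixes U :: "'i::wellorder \<Rightarrow> 'a::topological_space set"
  assumes o: "omega1_type TYPE('i)" and TI: "type_I_seq U" and iso: "isotopy H"
  shows "\<exists>\<gamma>. \<alpha> < \<gamma> \<and> confines H (initial_union U \<alpha>) (initial_union U \<gamma>)"
proof -
  obtain b where b: "\<And>\<beta>. confines H (U \<beta>) (U (b \<beta>))"
    using isotopy_uniformly_bounded[OF o TI iso] by metis
  have "countable (insert \<alpha> (b ` {..<\<alpha>}))"
    using o unfolding omega1_type_def lessThan_def by blast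
  then obtain \<gamma> where "\<forall>\<delta>\<in>insert \<alpha> (b ` {..<\<alpha>}). \<delta> < \<gamma>"
    using omega1_countable_bounded[OF o] by blast
  then have \<gamma>: "\<alpha> < \<gamma>" "\<And>\<beta>. \<beta> < \<alpha> \<Longrightarrow> b \<beta> < \<gamma>" by auto
  have "confines H (\<Union>\<beta>\<in>{..<\<alpha>}. U \<beta>) (\<Union>\<beta>\<in>{..<\<alpha>}. U (b \<beta>))"
    using b by (rule confines_UN)
  moreover have "(\<Union>\<beta>\<in>{..<\<alpha>}. U (b \<beta>)) \<subseteq> initial_union U \<gamma>"
    unfolding initial_union_def by (intro UN_least UN_upper) (simp add: \<gamma>(2))
  ultimately have "confines H (initial_union U \<alpha>) (initial_union U \<gamma>)"
    unfolding initial_union_def by (rule confines_mono)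
  with \<gamma>(1) show ?thesis by (intro exI[of _ \<gamma>] conjI)
qed

lemma invariant_union_of_confined_sequence:
  assumes "surj f" and "\<And>n. f ` A n \<subseteq> A (Suc n)" and "\<And>n. f -` A n \<subseteq> A (Suc n)"
  shows "f ` (\<Union>n. A n) = (\<Union>n. A n)"
proof
  show "f ` (\<Union>n. A n) \<subseteq> (\<Union>n. A n)" using assms(2) by blast
  show "(\<Union>n. A n) \<subseteq> f ` (\<Union>n. A n)"
  proof
    fix z assume "z \<in> (\<Union>n. A n)"
    moreover obtain y where "z = f y" using assms(1) by (metis surjD)
    ultimately show "z \<in> f ` (\<Union>n. A n)" using assms(3) by blast
  qed
qed

lemma initial_union_sequence_sup:
  assumes increasing: "\<And>n. a n < a (Suc n)"
    and bound: "\<And>n. a n < \<gamma>" and sup: "\<And>\<beta>. \<beta> < \<gamma> \<Longrightarrow> \<exists>n. \<beta> \<le> a n"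
  shows "initial_union U \<gamma> = (\<Union>n. initial_union U (a n))"
proof
  show "initial_union U \<gamma> \<subseteq> (\<Union>n. initial_union U (a n))"
    unfolding initial_union_def using sup increasing by (fastforce dest: le_less_trans)
  show "(\<Union>n. initial_union U (a n)) \<subseteq> initial_union U \<gamma>"
    unfolding initial_union_def using bound by (fastforce dest: less_trans)
qed

lemma initial_union_cofinal:
  assumes "\<forall>\<beta><\<alpha>. \<exists>\<gamma>\<in>C. \<beta> < \<gamma> \<and> \<gamma> < \<alpha>"
  shows "initial_union U \<alpha> = (\<Union>\<gamma>\<in>C \<inter> {..<\<alpha>}. initial_union U \<gamma>)"
  using assms unfolding initial_union_def by (fastforce dest: less_trans)

lemma isotopy_surj:
  assumes "isotopy H" "t \<in> {0..1}"
  shows "surj (\<lambda>x. H (x, t))"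
  using isotopy_homeomorphism[OF assms] unfolding homeomorphism_def by auto

definition invariant_under :: "('a \<times> real \<Rightarrow> 'a) \<Rightarrow> 'a set \<Rightarrow> bool" where
  "invariant_under H A \<longleftrightarrow> (\<forall>t\<in>{0..1}. (\<lambda>x. H (x, t)) ` A = A)"

text \<open>Unboundedness: iterating the confinement bound omega times from alpha and passing
  to the supremum gamma gives an invariant initial union at gamma.\<close>
lemma invariant_initial_unions_unbounded:
  fixes U :: "'i::wellorder \<Rightarrow> 'a::topological_space set"
  assumes o: "omega1_type TYPE('i)" and TI: "type_I_seq U" and iso: "isotopy H"
  shows "\<exists>\<gamma>. \<alpha> \<le> \<gamma> \<and> invariant_under H (initial_union U \<gamma>)"
proof -
  obtain g where g: "\<And>\<alpha>. \<alpha> < g \<alpha> \<and> confines H (initial_union U \<alpha>) (initial_union U (g \<alpha>))"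
    using isotopy_initial_union_bounded[OF o TI iso] by metis
  define a where "a n = (g ^^ n) \<alpha>" for n
  obtain \<gamma> where \<gamma>: "\<And>n. a n < \<gamma>" "\<And>\<beta>. \<beta> < \<gamma> \<Longrightarrow> \<exists>n. \<beta> \<le> a n"
    using omega1_sequence_sup[OF o] by blast
  have chain: "initial_union U \<gamma> = (\<Union>n. initial_union U (a n))"
    using g by (intro initial_union_sequence_sup \<gamma>) (simp add: a_def)
  have "(\<lambda>x. H (x, t)) ` initial_union U \<gamma> = initial_union U \<gamma>" if t: "t \<in> {0..1}" for t
    unfolding chain
  proof (rule invariant_union_of_confined_sequence)
    show "surj (\<lambda>x. H (x, t))" using isotopy_surj[OF iso t] .
    show "(\<lambda>x. H (x, t)) ` initial_union U (a n) \<subseteq> initial_union U (a (Suc n))"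
      and "(\<lambda>x. H (x, t)) -` initial_union U (a n) \<subseteq> initial_union U (a (Suc n))" for n
      using g[of "a n"] t by (simp_all add: a_def confines_def)
  qed
  moreover have "\<alpha> \<le> \<gamma>" using \<gamma>(1)[of 0] by (simp add: a_def)
  ultimately show ?thesis unfolding invariant_under_def by blast
qed

lemma invariant_initial_unions_closed:
  assumes "\<forall>\<beta><\<alpha>. \<exists>\<gamma>\<in>{\<gamma>. invariant_under H (initial_union U \<gamma>)}. \<beta> < \<gamma> \<and> \<gamma> < \<alpha>"
  shows "invariant_under H (initial_union U \<alpha>)"
  using initial_union_cofinal[OF assms, of U] unfolding invariant_under_def by (simp add: image_UN)

theorem corollary2p2:
  fixes U :: "'i::wellorder \<Rightarrow> 'a::topological_space set"
    and H :: "'a \<times> real \<Rightarrow> 'a"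
  assumes "omega1_type TYPE('i)"
    and "type_I_seq U"
    and "isotopy H"
  shows "club {\<alpha>. \<forall>t\<in>{0..1}. (\<lambda>x. H (x, t)) ` (\<Union>\<beta>\<in>{..<\<alpha>}. U \<beta>) = (\<Union>\<beta>\<in>{..<\<alpha>}. U \<beta>)}"
proof -
  let ?C = "{\<alpha>. invariant_under H (initial_union U \<alpha>)}"
  have "\<exists>\<gamma>\<in>?C. \<alpha> \<le> \<gamma>" for \<alpha>
    using invariant_initial_unions_unbounded[OF assms] by blast
  moreover have "\<alpha> \<in> ?C" if "\<forall>\<beta><\<alpha>. \<exists>\<gamma>\<in>?C. \<beta> < \<gamma> \<and> \<gamma> < \<alpha>" for \<alpha>
    using invariant_initial_unions_closed[OF that] by blast
  ultimately have "club ?C" unfolding club_def by blast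
  then show ?thesis unfolding invariant_under_def initial_union_def .
qed

end
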